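(* Let $H=\sum_{a\in\mathcal T}\lambda_aQ_a$ be a Hamiltonian on $n$ qubits, with $Q_a$ Pauli strings, $|\lambda_a|\le1$ and $|\mathrm{supp}(Q_a)|\le k$ for all $a$. Fix an ordering $(a_1,\dots,a_M)$ of $\mathcal T$ ($M=|\mathcal T|$), a step size $\delta>0$, and write $G_m:=e^{\delta\lambda_{a_m}Q_{a_m}}$. For integers $p\ge0$ and $0\le j<M$ let $$U_{\mathrm{right}}^{(p,j)}:=(G_1G_2\cdots G_M)^p\,(G_1\cdots G_j),\qquad U_{\mathrm{left}}^{(p,j)}:=(G_j\cdots G_1)\,(G_M\cdots G_1)^p,$$ and $X_{p,j}:=U_{\mathrm{left}}^{(p,j)}U_{\mathrm{right}}^{(p,j)}$. Let $P\ne\mathbb I$ be a Pauli string with support $R$, $w:=|R|$, $r:=\lceil w/k\rceil$, and let $B:=|\{a\in\mathcal T:\mathrm{supp}(Q_a)\cap R\ne\emptyset\}|$. Set $\beta:=(p+1)\delta$. Then $$2^{-n}\,|\operatorname{Tr}(PX_{p,j})|\le\Big(\frac{2e\beta Be^{\delta}}{r}\Big)^{r}e^{2\beta M}.$$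
   Context: $\mathrm{supp}(Q)$ is the set of qubits on which the Pauli string $Q$ acts non-trivially. *)

theory Defs
  imports Complex_Main "Jordan_Normal_Form.Matrix"
begin

datatype pauli = PI | PX | PY | PZ

definition pauli1 :: "pauli \<Rightarrow> nat \<Rightarrow> nat \<Rightarrow> complex" where
  "pauli1 s a b = (case s of
      PI \<Rightarrow> (if a = b then 1 else 0)
    | PX \<Rightarrow> (if a \<noteq> b then 1 else 0)
    | PY \<Rightarrow> (if a = 0 \<and> b = 1 then - \<i> else if a = 1 \<and> b = 0 then \<i> else 0)
    | PZ \<Rightarrow> (if a = b then (if a = 0 then 1 else -1) else 0))"

text \<open>Bit q of basis index i (qubit q of the computational basis state).\<close>
definition bit_of :: "nat \<Rightarrow> nat \<Rightarrow> nat" where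
  "bit_of i q = (i div 2 ^ q) mod 2"

text \<open>Matrix of a Pauli string (tensor product, written entrywise) on 2^n dimensional space.\<close>
definition pauli_mat :: "pauli list \<Rightarrow> complex mat" where
  "pauli_mat P = mat (2 ^ length P) (2 ^ length P)
     (\<lambda>(i, j). \<Prod>q<length P. pauli1 (P ! q) (bit_of i q) (bit_of j q))"

definition supp :: "pauli list \<Rightarrow> nat set" where
  "supp P = {q. q < length P \<and> P ! q \<noteq> PI}"

definition mtrace :: "complex mat \<Rightarrow> complex" where
  "mtrace A = (\<Sum>i<dim_row A. A $$ (i, i))"

definition mexp :: "complex mat \<Rightarrow> complex mat" where
  "mexp A = mat (dim_row A) (dim_col A)
     (\<lambda>(i, j). \<Sum>k. (A ^\<^sub>m k) $$ (i, j) / of_nat (fact k))"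

definition mprod_list :: "nat \<Rightarrow> complex mat list \<Rightarrow> complex mat" where
  "mprod_list d As = foldr (\<lambda>A B. A * B) As (1\<^sub>m d)"

end

(* Since Q^2 = 1, every factor is exp (x Q) = cosh x + sinh x Q. Expanding the product of the
   L = 2j + 2pM <= 2 (p + 1) M factors of X gives a sum over Pauli paths, which pick cosh or
   sinh Q in every factor. Each path contributes at most 2^n to |Tr (P X)|, and it contributes 0
   unless its Pauli product is non-identity on every qubit of supp P; as each Q covers at most k
   qubits, such a path picks sinh Q in at least r = ceil (w / k) of the N <= 2 (p + 1) B factors
   whose support meets supp P. Summing the weights gives
     2^-n |Tr (P X)| <= (N choose r) sinh^r delta exp (L delta),
   and (N choose r) <= (e N / r)^r, sinh delta <= delta exp delta finish the estimate. *)

theory Submission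
  imports Defs
begin

section \<open>Tensor products of 2x2 matrices\<close>

lemma bit_of_add_pow2:
  assumes "l < 2 ^ n"
  shows "bit_of (l + 2 ^ n) n = 1" and "q < n \<Longrightarrow> bit_of (l + 2 ^ n) q = bit_of l q"
proof -
  show "bit_of (l + 2 ^ n) n = 1"
    using assms by (simp add: bit_of_def)
next
  assume q: "q < n"
  have "(2::nat) ^ n = 2 ^ q * 2 ^ (n - q)"
    using q by (simp flip: power_add)
  then have "(l + 2 ^ n) div 2 ^ q = l div 2 ^ q + 2 ^ (n - q)"
    by simp
  moreover have "even ((2::nat) ^ (n - q))"
    using q by simp
  ultimately show "bit_of (l + 2 ^ n) q = bit_of l q"
    unfolding bit_of_def by (auto simp: mod2_eq_if)
qed

lemma sum_bits_prod:
  fixes h :: "nat \<Rightarrow> nat \<Rightarrow> 'a::comm_semiring_1"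
  shows "(\<Sum>l<2 ^ n. \<Prod>q<n. h q (bit_of l q)) = (\<Prod>q<n. h q 0 + h q 1)"
proof (induction n)
  case 0
  then show ?case by simp
next
  case (Suc n)
  let ?S = "\<lambda>l. \<Prod>q<Suc n. h q (bit_of l q)"
  have low: "(\<Sum>l<2 ^ n. ?S l) = (\<Sum>l<2 ^ n. \<Prod>q<n. h q (bit_of l q)) * h n 0"
    by (simp add: sum_distrib_right bit_of_def)
  have "(\<Sum>l\<in>{2 ^ n..<2 ^ n + 2 ^ n}. ?S l) = (\<Sum>l<2 ^ n. ?S (l + 2 ^ n))"
    by (simp add: sum.shift_bounds_nat_ivl[of ?S 0 "2 ^ n" "2 ^ n", simplified] atLeast0LessThan)
  also have "\<dots> = (\<Sum>l<2 ^ n. \<Prod>q<n. h q (bit_of l q)) * h n 1"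
    by (auto simp: sum_distrib_right bit_of_add_pow2 intro!: sum.cong prod.cong)
  finally have high: "(\<Sum>l\<in>{2 ^ n..<2 ^ n + 2 ^ n}. ?S l) = \<dots>" .
  have split: "{..<(2::nat) ^ Suc n} = {..<2 ^ n} \<union> {2 ^ n..<2 ^ n + 2 ^ n}"
    by auto
  have "(\<Sum>l<2 ^ Suc n. ?S l) = (\<Sum>l<2 ^ n. ?S l) + (\<Sum>l\<in>{2 ^ n..<2 ^ n + 2 ^ n}. ?S l)"
    unfolding split by (rule sum.union_disjoint) auto
  then show ?case
    using low high Suc by (simp add: distrib_left)
qed

lemma bits_eq_imp_eq:
  assumes "i < 2 ^ n" "j < 2 ^ n" "\<forall>q<n. bit_of i q = bit_of j q"
  shows "i = j"
  using assms
proof (induction n arbitrary: i j)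
  case 0
  then show ?case by simp
next
  case (Suc n)
  have "\<forall>q<n. bit_of (i div 2) q = bit_of (j div 2) q"
    using Suc.prems(3) by (auto simp: bit_of_def div_mult2_eq)
  then have "i div 2 = j div 2"
    using Suc by auto
  moreover have "i mod 2 = j mod 2"
    using Suc.prems(3) by (auto simp: bit_of_def)
  ultimately show ?case
    by (metis div_mult_mod_eq)
qed

text \<open>A 2x2 matrix is a function of type nat \<Rightarrow> nat \<Rightarrow> complex read on indices below 2;
  \<open>tensor_mat n f\<close> is the tensor product of \<open>f 0, \<dots>, f (n - 1)\<close>, factor \<open>f q\<close> acting on bit \<open>q\<close>.\<close>

definition tensor_mat :: "nat \<Rightarrow> (nat \<Rightarrow> nat \<Rightarrow> nat \<Rightarrow> complex) \<Rightarrow> complex mat" where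
  "tensor_mat n f = mat (2 ^ n) (2 ^ n) (\<lambda>(i, j). \<Prod>q<n. f q (bit_of i q) (bit_of j q))"

definition mult2 :: "(nat \<Rightarrow> nat \<Rightarrow> complex) \<Rightarrow> (nat \<Rightarrow> nat \<Rightarrow> complex) \<Rightarrow> nat \<Rightarrow> nat \<Rightarrow> complex" where
  "mult2 f g a b = (\<Sum>l<2. f a l * g l b)"

definition id2 :: "nat \<Rightarrow> nat \<Rightarrow> complex" where
  "id2 a b = (if a = b then 1 else 0)"

lemma dim_tensor_mat [simp]:
  "dim_row (tensor_mat n f) = 2 ^ n" "dim_col (tensor_mat n f) = 2 ^ n"
  by (simp_all add: tensor_mat_def)

lemma index_tensor_mat:
  "i < 2 ^ n \<Longrightarrow> j < 2 ^ n \<Longrightarrow> tensor_mat n f $$ (i, j) = (\<Prod>q<n. f q (bit_of i q) (bit_of j q))"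
  by (simp add: tensor_mat_def)

lemma tensor_mat_cong:
  "(\<And>q a b. q < n \<Longrightarrow> a < 2 \<Longrightarrow> b < 2 \<Longrightarrow> f q a b = g q a b) \<Longrightarrow> tensor_mat n f = tensor_mat n g"
  unfolding tensor_mat_def by (intro eq_matI) (auto simp: bit_of_def intro!: prod.cong)

lemma tensor_mat_mult: "tensor_mat n f * tensor_mat n g = tensor_mat n (\<lambda>q. mult2 (f q) (g q))"
proof (rule eq_matI)
  fix i j
  assume "i < dim_row (tensor_mat n (\<lambda>q. mult2 (f q) (g q)))"
    and "j < dim_col (tensor_mat n (\<lambda>q. mult2 (f q) (g q)))"
  then have i: "i < 2 ^ n" and j: "j < 2 ^ n" by auto
  have "(tensor_mat n f * tensor_mat n g) $$ (i, j)
      = (\<Sum>l<2 ^ n. \<Prod>q<n. f q (bit_of i q) (bit_of l q) * g q (bit_of l q) (bit_of j q))"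
    using i j by (auto simp: scalar_prod_def index_tensor_mat prod.distrib atLeast0LessThan
        intro!: sum.cong)
  also have "\<dots> = (\<Prod>q<n. f q (bit_of i q) 0 * g q 0 (bit_of j q) + f q (bit_of i q) 1 * g q 1 (bit_of j q))"
    by (rule sum_bits_prod)
  also have "\<dots> = tensor_mat n (\<lambda>q. mult2 (f q) (g q)) $$ (i, j)"
    using i j by (simp add: index_tensor_mat mult2_def numeral_2_eq_2)
  finally show "(tensor_mat n f * tensor_mat n g) $$ (i, j) = tensor_mat n (\<lambda>q. mult2 (f q) (g q)) $$ (i, j)" .
qed auto

lemma mtrace_tensor_mat: "mtrace (tensor_mat n f) = (\<Prod>q<n. f q 0 0 + f q 1 1)"
proof -
  have "mtrace (tensor_mat n f) = (\<Sum>l<2 ^ n. \<Prod>q<n. f q (bit_of l q) (bit_of l q))"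
    unfolding mtrace_def by (auto simp: index_tensor_mat intro!: sum.cong)
  also have "\<dots> = (\<Prod>q<n. f q 0 0 + f q 1 1)"
    by (rule sum_bits_prod)
  finally show ?thesis .
qed

lemma one_mat_eq_tensor_mat: "1\<^sub>m (2 ^ n) = tensor_mat n (\<lambda>_. id2)"
proof (rule eq_matI)
  fix i j
  assume "i < dim_row (tensor_mat n (\<lambda>_. id2))" "j < dim_col (tensor_mat n (\<lambda>_. id2))"
  then have i: "i < 2 ^ n" and j: "j < 2 ^ n" by auto
  show "1\<^sub>m (2 ^ n) $$ (i, j) = tensor_mat n (\<lambda>_. id2) $$ (i, j)"
  proof (cases "i = j")
    case True
    then show ?thesis using i by (simp add: index_tensor_mat id2_def)
  next
    case False
    then obtain q where "q < n" "bit_of i q \<noteq> bit_of j q"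
      using bits_eq_imp_eq[OF i j] by blast
    then have "(\<Prod>q<n. id2 (bit_of i q) (bit_of j q)) = 0"
      by (intro prod_zero) (auto simp: id2_def)
    then show ?thesis using i j False by (simp add: index_tensor_mat)
  qed
qed auto

lemma mult2_id2_right: "b < 2 \<Longrightarrow> mult2 f id2 a b = f a b"
  by (auto simp: mult2_def id2_def numeral_2_eq_2 less_Suc_eq)

lemma pauli_mat_eq_tensor_mat: "pauli_mat P = tensor_mat (length P) (\<lambda>q. pauli1 (P ! q))"
  by (simp add: pauli_mat_def tensor_mat_def)

lemma pauli_mat_carrier [simp]: "pauli_mat P \<in> carrier_mat (2 ^ length P) (2 ^ length P)"
  by (simp add: pauli_mat_def)

lemma pauli1_PI: "pauli1 PI = id2"
  by (intro ext) (simp add: pauli1_def id2_def)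

lemma pauli1_square: "a < 2 \<Longrightarrow> b < 2 \<Longrightarrow> mult2 (pauli1 s) (pauli1 s) a b = id2 a b"
  by (cases s) (auto simp: mult2_def pauli1_def id2_def less_2_cases_iff numeral_2_eq_2)

lemma pauli1_traceless: "s \<noteq> PI \<Longrightarrow> pauli1 s 0 0 + pauli1 s 1 1 = 0"
  by (cases s) (auto simp: pauli1_def)

lemma pauli_mat_square: "pauli_mat P * pauli_mat P = 1\<^sub>m (2 ^ length P)"
  unfolding pauli_mat_eq_tensor_mat tensor_mat_mult one_mat_eq_tensor_mat
  by (rule tensor_mat_cong) (simp add: pauli1_square)

definition row_contraction :: "(nat \<Rightarrow> nat \<Rightarrow> complex) \<Rightarrow> bool" where
  "row_contraction f \<longleftrightarrow> (\<forall>a<2. cmod (f a 0) + cmod (f a 1) \<le> 1)"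

lemma row_contraction_id2: "row_contraction id2"
  by (auto simp: row_contraction_def id2_def less_2_cases_iff)

lemma row_contraction_pauli1: "row_contraction (pauli1 s)"
  by (cases s) (auto simp: row_contraction_def pauli1_def less_2_cases_iff)

lemma row_contraction_mult2:
  assumes f: "row_contraction f" and g: "row_contraction g"
  shows "row_contraction (mult2 f g)"
  unfolding row_contraction_def
proof (intro allI impI)
  fix a :: nat
  assume a: "a < 2"
  have g0: "cmod (g 0 0) + cmod (g 0 1) \<le> 1" and g1: "cmod (g 1 0) + cmod (g 1 1) \<le> 1"
    using g by (auto simp: row_contraction_def)
  have "cmod (mult2 f g a 0) + cmod (mult2 f g a 1)
     \<le> (cmod (f a 0) * cmod (g 0 0) + cmod (f a 1) * cmod (g 1 0))
       + (cmod (f a 0) * cmod (g 0 1) + cmod (f a 1) * cmod (g 1 1))"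
    unfolding mult2_def numeral_2_eq_2
    by (intro add_mono) (simp_all flip: norm_mult add: norm_triangle_ineq)
  also have "\<dots> = cmod (f a 0) * (cmod (g 0 0) + cmod (g 0 1)) + cmod (f a 1) * (cmod (g 1 0) + cmod (g 1 1))"
    by (simp add: algebra_simps)
  also have "\<dots> \<le> cmod (f a 0) + cmod (f a 1)"
    using mult_left_mono[OF g0, of "cmod (f a 0)"] mult_left_mono[OF g1, of "cmod (f a 1)"] by simp
  also have "\<dots> \<le> 1"
    using f a by (auto simp: row_contraction_def)
  finally show "cmod (mult2 f g a 0) + cmod (mult2 f g a 1) \<le> 1" .
qed

lemma row_contraction_trace_le: "row_contraction f \<Longrightarrow> cmod (f 0 0 + f 1 1) \<le> 2"
proof -
  assume "row_contraction f"
  then have "cmod (f 0 0) + cmod (f 0 1) \<le> 1" "cmod (f 1 0) + cmod (f 1 1) \<le> 1"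
    by (auto simp: row_contraction_def)
  then show ?thesis
    using norm_triangle_ineq[of "f 0 0" "f 1 1"] norm_ge_zero[of "f 0 1"] norm_ge_zero[of "f 1 0"]
    by linarith
qed

lemma mtrace_pauli_tensor_le:
  assumes "length P = n" "\<forall>q<n. row_contraction (g q)"
  shows "cmod (mtrace (pauli_mat P * tensor_mat n g)) \<le> 2 ^ n"
proof -
  have "cmod (mtrace (pauli_mat P * tensor_mat n g))
      = (\<Prod>q<n. cmod (mult2 (pauli1 (P ! q)) (g q) 0 0 + mult2 (pauli1 (P ! q)) (g q) 1 1))"
    using assms(1) by (simp add: pauli_mat_eq_tensor_mat tensor_mat_mult mtrace_tensor_mat prod_norm)
  also have "\<dots> \<le> (\<Prod>q<n. 2)"
    using assms(2)
    by (intro prod_mono conjI norm_ge_zero row_contraction_trace_le row_contraction_mult2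
        row_contraction_pauli1) auto
  finally show ?thesis by simp
qed

lemma mtrace_pauli_tensor_eq_0:
  assumes "length P = n" "q < n" "P ! q \<noteq> PI" "\<forall>a<2. \<forall>b<2. g q a b = id2 a b"
  shows "mtrace (pauli_mat P * tensor_mat n g) = 0"
proof -
  have "mult2 (pauli1 (P ! q)) (g q) a b = pauli1 (P ! q) a b" if "b < 2" for a b
    using assms(4) that mult2_id2_right[OF that] by (simp add: mult2_def)
  then have "mult2 (pauli1 (P ! q)) (g q) 0 0 + mult2 (pauli1 (P ! q)) (g q) 1 1 = 0"
    using pauli1_traceless[OF assms(3)] by simp
  then show ?thesis
    using assms(1,2) by (auto simp: pauli_mat_eq_tensor_mat tensor_mat_mult mtrace_tensor_mat)
qed

section \<open>Matrix exponentials and ordered products\<close>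

lemma smult_pow_mat:
  fixes c :: "'a::comm_ring_1"
  assumes A: "A \<in> carrier_mat d d"
  shows "(c \<cdot>\<^sub>m A) ^\<^sub>m k = c ^ k \<cdot>\<^sub>m A ^\<^sub>m k"
proof (induction k)
  case 0
  then show ?case by (intro eq_matI) auto
next
  case (Suc k)
  have "(c \<cdot>\<^sub>m A) ^\<^sub>m Suc k = c ^ k \<cdot>\<^sub>m (A ^\<^sub>m k * (c \<cdot>\<^sub>m A))"
    using Suc A by (simp add: mult_smult_assoc_mat[of "A ^\<^sub>m k" d d _ d])
  also have "\<dots> = c ^ Suc k \<cdot>\<^sub>m (A ^\<^sub>m k * A)"
    using A by (subst mult_smult_distrib[of _ d d]) auto
  finally show ?case by simp
qed

lemma involution_pow_mat:
  fixes A :: "'a::semiring_1 mat"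
  assumes A: "A \<in> carrier_mat d d" and AA: "A * A = 1\<^sub>m d"
  shows "A ^\<^sub>m k = (if even k then 1\<^sub>m d else A)"
  by (induction k) (use A AA in auto)

text \<open>Since the powers of \<open>A\<close> alternate between \<open>1\<close> and \<open>A\<close>, the exponential series splits into
  the series of cosh and sinh.\<close>
lemma mexp_smult_involution:
  assumes A: "A \<in> carrier_mat d d" and AA: "A * A = 1\<^sub>m d"
  shows "mexp (complex_of_real x \<cdot>\<^sub>m A)
       = complex_of_real (cosh x) \<cdot>\<^sub>m 1\<^sub>m d + complex_of_real (sinh x) \<cdot>\<^sub>m A"
proof (rule eq_matI)
  fix i j
  assume "i < dim_row (complex_of_real (cosh x) \<cdot>\<^sub>m 1\<^sub>m d + complex_of_real (sinh x) \<cdot>\<^sub>m A)"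
    "j < dim_col (complex_of_real (cosh x) \<cdot>\<^sub>m 1\<^sub>m d + complex_of_real (sinh x) \<cdot>\<^sub>m A)"
  then have i: "i < d" and j: "j < d" using A by auto
  define u :: complex where "u = (if i = j then 1 else 0)"
  have term_split: "((complex_of_real x \<cdot>\<^sub>m A) ^\<^sub>m k) $$ (i, j) / of_nat (fact k)
     = complex_of_real (if even k then x ^ k /\<^sub>R fact k else 0) * u
       + complex_of_real (if even k then 0 else x ^ k /\<^sub>R fact k) * A $$ (i, j)" for k
    using i j A
    by (auto simp: smult_pow_mat[OF A] involution_pow_mat[OF A AA] u_def field_simps)
  have "(\<lambda>k. ((complex_of_real x \<cdot>\<^sub>m A) ^\<^sub>m k) $$ (i, j) / of_nat (fact k)) sums
        (complex_of_real (cosh x) * u + complex_of_real (sinh x) * A $$ (i, j))"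
    unfolding term_split
    by (intro sums_add sums_mult2 sums_of_real cosh_converges sinh_converges)
  then show "mexp (complex_of_real x \<cdot>\<^sub>m A) $$ (i, j)
      = (complex_of_real (cosh x) \<cdot>\<^sub>m 1\<^sub>m d + complex_of_real (sinh x) \<cdot>\<^sub>m A) $$ (i, j)"
    using i j A by (simp add: mexp_def u_def sums_iff)
qed (use A in \<open>auto simp: mexp_def\<close>)

lemma mprod_list_Nil [simp]: "mprod_list d [] = 1\<^sub>m d"
  by (simp add: mprod_list_def)

lemma mprod_list_Cons [simp]: "mprod_list d (A # As) = A * mprod_list d As"
  by (simp add: mprod_list_def)

lemma mprod_list_carrier: "set As \<subseteq> carrier_mat d d \<Longrightarrow> mprod_list d As \<in> carrier_mat d d"
  by (induction As) (auto intro!: mult_carrier_mat)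

lemma mprod_list_append:
  "set As \<subseteq> carrier_mat d d \<Longrightarrow> set Bs \<subseteq> carrier_mat d d
    \<Longrightarrow> mprod_list d (As @ Bs) = mprod_list d As * mprod_list d Bs"
proof (induction As)
  case Nil
  then show ?case using mprod_list_carrier[of Bs d] by auto
next
  case (Cons A As)
  then have "A \<in> carrier_mat d d" "mprod_list d As \<in> carrier_mat d d" "mprod_list d Bs \<in> carrier_mat d d"
    by (auto intro!: mprod_list_carrier)
  then show ?case
    using Cons by (simp add: assoc_mult_mat[of _ d d _ d _ d])
qed

lemma mprod_list_pow:
  assumes "set As \<subseteq> carrier_mat d d"
  shows "mprod_list d As ^\<^sub>m p = mprod_list d (concat (replicate p As))"
proof (induction p)
  case 0
  then show ?case using mprod_list_carrier[OF assms] by simp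
next
  case (Suc p)
  have "concat (replicate (Suc p) As) = concat (replicate p As) @ As"
    by (simp flip: replicate_append_same)
  moreover have "set (concat (replicate p As)) \<subseteq> carrier_mat d d"
    using assms by auto
  ultimately show ?case
    using Suc assms by (simp add: mprod_list_append)
qed

lemma mprod_list_pow_sandwich:
  assumes "set (As @ Bs @ Cs @ Ds) \<subseteq> carrier_mat d d"
  shows "mprod_list d As * mprod_list d Bs ^\<^sub>m p * mprod_list d Cs ^\<^sub>m p * mprod_list d Ds
    = mprod_list d (As @ concat (replicate p Bs) @ concat (replicate p Cs) @ Ds)"
proof -
  have "mprod_list d As \<in> carrier_mat d d" "mprod_list d (concat (replicate p Bs)) \<in> carrier_mat d d"
    "mprod_list d (concat (replicate p Cs)) \<in> carrier_mat d d" "mprod_list d Ds \<in> carrier_mat d d"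
    and "set (concat (replicate p Bs)) \<subseteq> carrier_mat d d" "set (concat (replicate p Cs)) \<subseteq> carrier_mat d d"
    using assms by (auto intro!: mprod_list_carrier)
  then show ?thesis
    using assms by (simp add: mprod_list_pow mprod_list_append assoc_mult_mat[of _ d d _ d _ d])
qed

section \<open>Pauli paths\<close>

lemma finite_supp [simp]: "finite (supp Q)"
  by (rule finite_subset[of _ "{..<length Q}"]) (auto simp: supp_def)

lemma mtrace_smult_add:
  "A \<in> carrier_mat d d \<Longrightarrow> B \<in> carrier_mat d d \<Longrightarrow>
   mtrace (c \<cdot>\<^sub>m A + s \<cdot>\<^sub>m B) = c * mtrace A + s * mtrace B"
  by (simp add: mtrace_def sum.distrib sum_distrib_left)

lemma mtrace_expand_factor:
  assumes "P \<in> carrier_mat d d" "T \<in> carrier_mat d d" "Q \<in> carrier_mat d d" "R \<in> carrier_mat d d"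
  shows "mtrace (P * (T * ((c \<cdot>\<^sub>m 1\<^sub>m d + s \<cdot>\<^sub>m Q) * R)))
       = c * mtrace (P * (T * R)) + s * mtrace (P * (T * Q * R))"
proof -
  have "P * (T * ((c \<cdot>\<^sub>m 1\<^sub>m d + s \<cdot>\<^sub>m Q) * R)) = c \<cdot>\<^sub>m (P * (T * R)) + s \<cdot>\<^sub>m (P * (T * Q * R))"
    using assms
    by (simp add: add_mult_distrib_mat[of _ d d] mult_add_distrib_mat[of _ d d _ d]
        mult_smult_assoc_mat[of _ d d] mult_smult_distrib[of _ d d _ d] assoc_mult_mat[of _ d d _ d _ d])
  then show ?thesis
    using assms by (simp add: mtrace_smult_add[of _ d])
qed

text \<open>Expanding each factor \<open>c \<cdot> 1 + s \<cdot> Q\<close> of a product gives a sum over Pauli paths, which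
  pick the term \<open>c\<close> or \<open>s Q\<close> in every factor. The weight \<open>cover_weight ws m\<close> sums the
  products of these weights over the paths that pick \<open>s Q\<close> in at least \<open>m\<close> of the factors
  flagged \<open>True\<close> (the truncated subtraction keeps \<open>m = 0\<close> at 0).\<close>

fun cover_weight :: "(real \<times> real \<times> bool) list \<Rightarrow> nat \<Rightarrow> real" where
  "cover_weight [] m = (if m = 0 then 1 else 0)"
| "cover_weight ((c, s, t) # ws) m = c * cover_weight ws m + s * cover_weight ws (if t then m - 1 else m)"

definition pauli_factor :: "nat \<Rightarrow> real \<times> real \<times> pauli list \<Rightarrow> complex mat" where
  "pauli_factor n = (\<lambda>(c, s, Q). complex_of_real c \<cdot>\<^sub>m 1\<^sub>m (2 ^ n) + complex_of_real s \<cdot>\<^sub>m pauli_mat Q)"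

definition factor_weight :: "nat set \<Rightarrow> real \<times> real \<times> pauli list \<Rightarrow> real \<times> real \<times> bool" where
  "factor_weight R = (\<lambda>(c, s, Q). (\<bar>c\<bar>, \<bar>s\<bar>, supp Q \<inter> R \<noteq> {}))"

lemma pauli_factor_carrier [simp]:
  "length Q = n \<Longrightarrow> pauli_factor n (c, s, Q) \<in> carrier_mat (2 ^ n) (2 ^ n)"
  using pauli_mat_carrier[of Q] by (simp add: pauli_factor_def)

lemma mtrace_tensor_mult_pauli_factor_le:
  assumes P: "length P = n" and Q: "length Q = n" and R: "R \<in> carrier_mat (2 ^ n) (2 ^ n)"
  shows "cmod (mtrace (pauli_mat P * (tensor_mat n g * (pauli_factor n (c, s, Q) * R))))
    \<le> \<bar>c\<bar> * cmod (mtrace (pauli_mat P * (tensor_mat n g * R)))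
      + \<bar>s\<bar> * cmod (mtrace (pauli_mat P * (tensor_mat n (\<lambda>q. mult2 (g q) (pauli1 (Q ! q))) * R)))"
proof -
  have "tensor_mat n g * pauli_mat Q = tensor_mat n (\<lambda>q. mult2 (g q) (pauli1 (Q ! q)))"
    unfolding pauli_mat_eq_tensor_mat Q tensor_mat_mult ..
  moreover have "mtrace (pauli_mat P * (tensor_mat n g * (pauli_factor n (c, s, Q) * R)))
    = c * mtrace (pauli_mat P * (tensor_mat n g * R)) + s * mtrace (pauli_mat P * (tensor_mat n g * pauli_mat Q * R))"
    unfolding pauli_factor_def using P Q R pauli_mat_carrier[of Q]
    by (simp only: prod.case) (rule mtrace_expand_factor; auto)
  ultimately show ?thesis
    by (simp only:) (rule order_trans[OF norm_triangle_ineq]; simp add: norm_mult)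
qed

lemma cover_demand_Diff:
  fixes m k :: nat
  assumes k: "k \<ge> 1" and S: "card S \<le> k" "finite S" and U: "U \<subseteq> V" "finite V"
    and m: "m * k < card U + k"
  shows "(if S \<inter> V \<noteq> {} then m - 1 else m) * k < card (U - S) + k"
proof (cases "S \<inter> V \<noteq> {}")
  case True
  have "card U \<le> card ((U - S) \<union> S)"
    using U S by (intro card_mono) (auto intro: finite_subset)
  also have "\<dots> \<le> card (U - S) + k"
    using card_Un_le[of "U - S" S] S by linarith
  finally show ?thesis
    using m k True by (cases m) auto
next
  case False
  then have "U - S = U"
    using U by auto
  then show ?thesis
    using m False by simp
qed

text \<open>The prefix \<open>tensor_mat n g\<close> is the product of the Pauli strings picked so far, and \<open>U\<close> is a
  set of qubits of \<open>supp P\<close> on which it is still the identity. Paths whose product stays the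
  identity somewhere on \<open>supp P\<close> have zero trace against \<open>P\<close>; since each factor covers at most
  \<open>k\<close> qubits, a path with nonzero trace picks \<open>s Q\<close> in at least \<open>\<lceil>|U| / k\<rceil>\<close> further factors
  whose \<open>Q\<close> meets \<open>supp P\<close>. The hypothesis \<open>m * k < card U + k\<close> says \<open>m \<le> \<lceil>|U| / k\<rceil>\<close>.\<close>
lemma mtrace_pauli_prod_le_cover_weight:
  assumes P: "length P = n" and k: "k \<ge> 1"
    and fs: "\<forall>(c, s, Q) \<in> set fs. length Q = n \<and> card (supp Q) \<le> k"
    and g: "\<forall>q<n. row_contraction (g q)"
    and U: "U \<subseteq> supp P" "\<forall>q\<in>U. \<forall>a<2. \<forall>b<2. g q a b = id2 a b"
    and m: "m * k < card U + k"
  shows "cmod (mtrace (pauli_mat P * (tensor_mat n g * mprod_list (2 ^ n) (map (pauli_factor n) fs))))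
    \<le> 2 ^ n * cover_weight (map (factor_weight (supp P)) fs) m"
  using fs g U m
proof (induction fs arbitrary: g U m)
  case Nil
  show ?case
  proof (cases "m = 0")
    case True
    then show ?thesis using mtrace_pauli_tensor_le[OF P Nil(2)] by simp
  next
    case False
    then have "U \<noteq> {}"
      using Nil(5) by (cases m) auto
    then obtain q where "q \<in> U" by blast
    then have "q < n" "P ! q \<noteq> PI"
      using Nil(3) P by (auto simp: supp_def)
    then show ?thesis
      using mtrace_pauli_tensor_eq_0[OF P] Nil(4) \<open>q \<in> U\<close> False by auto
  qed
next
  case (Cons f fs)
  obtain c s Q where f: "f = (c, s, Q)" by (cases f)
  have Q: "length Q = n" "card (supp Q) \<le> k" and fs: "\<forall>(c, s, Q) \<in> set fs. length Q = n \<and> card (supp Q) \<le> k"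
    using Cons.prems(1) f by auto
  define W where "W = cover_weight (map (factor_weight (supp P)) fs)"
  define R where "R = mprod_list (2 ^ n) (map (pauli_factor n) fs)"
  define g' where "g' = (\<lambda>q. mult2 (g q) (pauli1 (Q ! q)))"
  define m' where "m' = (if supp Q \<inter> supp P \<noteq> {} then m - 1 else m)"
  have g': "\<forall>q<n. row_contraction (g' q)"
    using Cons.prems(2) by (simp add: g'_def row_contraction_mult2 row_contraction_pauli1)
  have U': "\<forall>q\<in>U - supp Q. \<forall>a<2. \<forall>b<2. g' q a b = id2 a b"
    using Cons.prems(3,4) P Q(1) by (auto simp: g'_def supp_def pauli1_PI mult2_id2_right)
  have m': "m' * k < card (U - supp Q) + k"
    unfolding m'_def using k Q(2) Cons.prems(3,5) by (intro cover_demand_Diff) auto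
  have "R \<in> carrier_mat (2 ^ n) (2 ^ n)"
    unfolding R_def using fs by (intro mprod_list_carrier) auto
  then have "cmod (mtrace (pauli_mat P * (tensor_mat n g * mprod_list (2 ^ n) (map (pauli_factor n) (f # fs)))))
     \<le> \<bar>c\<bar> * cmod (mtrace (pauli_mat P * (tensor_mat n g * R)))
       + \<bar>s\<bar> * cmod (mtrace (pauli_mat P * (tensor_mat n g' * R)))"
    unfolding f g'_def R_def using P Q(1) by (simp add: mtrace_tensor_mult_pauli_factor_le)
  also have "\<dots> \<le> \<bar>c\<bar> * (2 ^ n * W m) + \<bar>s\<bar> * (2 ^ n * W m')"
    using Cons.IH[OF fs Cons.prems(2-5)] Cons.IH[OF fs g' _ U' m'] Cons.prems(3)
    by (intro add_mono mult_left_mono) (auto simp: R_def W_def)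
  also have "\<dots> = 2 ^ n * cover_weight (map (factor_weight (supp P)) (f # fs)) m"
    by (simp add: f W_def factor_weight_def m'_def algebra_simps Int_commute)
  finally show ?case .
qed

lemma cover_weight_le_binomial:
  assumes "\<forall>(c, s, t) \<in> set ws. 0 \<le> c \<and> 0 \<le> s \<and> s \<le> S \<and> c + s \<le> E"
    and E: "1 \<le> E" and S: "0 \<le> S"
  shows "cover_weight ws m \<le> real (length (filter (\<lambda>(_, _, t). t) ws) choose m) * S ^ m * E ^ length ws"
  using assms(1)
proof (induction ws arbitrary: m)
  case Nil
  then show ?case using S by simp
next
  case (Cons w ws)
  obtain c s t where w: "w = (c, s, t)" by (cases w)
  have cs: "0 \<le> c" "0 \<le> s" "s \<le> S" "c + s \<le> E"
    using Cons.prems w by auto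
  define N where "N = length (filter (\<lambda>(_, _, t). t) ws)"
  define b where "b = (\<lambda>m. real (N choose m) * S ^ m * E ^ length ws)"
  have b_nonneg: "0 \<le> b m" for m
    using S E by (simp add: b_def)
  have IH: "cover_weight ws m \<le> b m" for m
    using Cons by (auto simp: b_def N_def)
  show ?case
  proof (cases "t \<and> m > 0")
    case True
    then obtain m1 where m: "m = Suc m1" by (cases m) auto
    have "S \<le> E * S"
      using mult_right_mono[OF E S] by simp
    have "cover_weight (w # ws) m = c * cover_weight ws m + s * cover_weight ws m1"
      using True by (simp add: w m)
    also have "\<dots> \<le> c * b m + s * b m1"
      using cs by (intro add_mono mult_left_mono IH)
    also have "\<dots> \<le> E * b m + (E * S) * b m1"
      using cs \<open>S \<le> E * S\<close> by (intro add_mono mult_right_mono b_nonneg) auto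
    also have "\<dots> = real (Suc N choose m) * S ^ m * E ^ Suc (length ws)"
      by (simp add: m b_def algebra_simps)
    finally show ?thesis
      using True by (simp add: w N_def)
  next
    case False
    then have "cover_weight (w # ws) m = (c + s) * cover_weight ws m"
      by (auto simp: w algebra_simps)
    also have "\<dots> \<le> (c + s) * b m"
      using cs by (intro mult_left_mono IH) auto
    also have "\<dots> \<le> E * b m"
      using cs by (intro mult_right_mono b_nonneg)
    finally show ?thesis
      using False by (auto simp: w N_def b_def algebra_simps)
  qed
qed

section \<open>Elementary estimates\<close>

lemma pow_div_fact_le_exp:
  fixes x :: real
  assumes "0 \<le> x"
  shows "x ^ r / fact r \<le> exp x"
proof -
  have sums: "(\<lambda>i. x ^ i / fact i) sums exp x"
    using exp_converges[of x] by (simp add: divide_inverse mult.commute)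
  have "x ^ r / fact r = (\<Sum>i\<in>{r}. x ^ i / fact i)"
    by simp
  also have "\<dots> \<le> (\<Sum>i. x ^ i / fact i)"
    by (rule sum_le_suminf) (use sums assms in \<open>auto simp: sums_iff\<close>)
  also have "\<dots> = exp x"
    using sums by (simp add: sums_iff)
  finally show ?thesis .
qed

lemma binomial_le_exp_pow: "real (N choose r) \<le> (exp 1 * real N / real r) ^ r"
proof (cases "r = 0")
  case False
  have "real (N choose r) \<le> real N ^ r / fact r"
    using of_nat_mono[OF binomial_fact_pow[of N r]] by (simp add: field_simps)
  also have "\<dots> \<le> real N ^ r * (exp 1 ^ r / real r ^ r)"
  proof -
    have "real r ^ r / fact r \<le> exp 1 ^ r"
      using pow_div_fact_le_exp[of "real r" r] exp_of_nat_mult[of r "1::real"] by simp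
    then have "1 / fact r \<le> exp 1 ^ r / real r ^ r"
      using False by (simp add: field_simps)
    from mult_left_mono[OF this, of "real N ^ r"] show ?thesis
      by simp
  qed
  finally show ?thesis
    by (simp add: power_divide power_mult_distrib mult.commute)
qed simp

lemma sinh_le_mult_exp:
  fixes x :: real
  assumes "0 \<le> x"
  shows "sinh x \<le> x * exp x"
proof -
  have "1 - 2 * x \<le> exp (- (2 * x))"
    using exp_ge_add_one_self[of "- (2 * x)"] by simp
  also have "\<dots> = exp (- x) / exp x"
    using exp_diff[of "- x" x] by simp
  finally have "exp x * (1 - 2 * x) \<le> exp (- x)"
    by (simp add: field_simps)
  then show ?thesis
    by (simp add: sinh_def algebra_simps)
qed

lemma binomial_sinh_exp_le:
  fixes \<delta> \<beta> :: real
  assumes \<delta>: "0 \<le> \<delta>" and N: "real N * \<delta> \<le> 2 * \<beta> * real B" and L: "real L * \<delta> \<le> 2 * \<beta> * real M"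
  shows "real (N choose r) * sinh \<delta> ^ r * exp \<delta> ^ L
    \<le> (2 * exp 1 * \<beta> * real B * exp \<delta> / real r) ^ r * exp (2 * \<beta> * real M)"
proof -
  have "real (N choose r) * sinh \<delta> ^ r \<le> (exp 1 * real N / real r) ^ r * (\<delta> * exp \<delta>) ^ r"
    using \<delta> by (intro mult_mono binomial_le_exp_pow power_mono sinh_le_mult_exp) auto
  also have "\<dots> = (exp 1 * (real N * \<delta>) * exp \<delta> / real r) ^ r"
    by (simp add: mult_ac flip: power_mult_distrib)
  also have "\<dots> \<le> (2 * exp 1 * \<beta> * real B * exp \<delta> / real r) ^ r"
    using N \<delta> by (intro power_mono divide_right_mono) (auto simp: mult_left_mono mult_right_mono)
  finally have binom: "real (N choose r) * sinh \<delta> ^ r \<le> (2 * exp 1 * \<beta> * real B * exp \<delta> / real r) ^ r" .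
  have "exp \<delta> ^ L \<le> exp (2 * \<beta> * real M)"
    using L by (simp flip: exp_of_nat_mult)
  moreover have "0 \<le> real (N choose r) * sinh \<delta> ^ r"
    using \<delta> by simp
  ultimately show ?thesis
    using binom by (intro mult_mono) auto
qed

lemma ceiling_div_mult_less:
  fixes w k :: nat
  assumes "k \<ge> 1"
  shows "nat \<lceil>real w / real k\<rceil> * k < w + k"
proof -
  have "(of_int \<lceil>real w / real k\<rceil> - 1) * real k < real w"
    using assms by (intro ceiling_divide_lower) auto
  moreover have "\<lceil>real w / real k\<rceil> \<ge> 0"
    by (simp add: order.strict_trans2[of "-1" 0])
  ultimately have "real (nat \<lceil>real w / real k\<rceil> * k) < real (w + k)"
    by (simp add: algebra_simps)
  then show ?thesis
    by (simp only: of_nat_less_iff)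
qed

section \<open>Products of Pauli rotations\<close>

definition pauli_exp :: "real \<Rightarrow> pauli list \<Rightarrow> complex mat" where
  "pauli_exp y Q = mexp (complex_of_real y \<cdot>\<^sub>m pauli_mat Q)"

lemma pauli_exp_eq_pauli_factor: "pauli_exp y Q = pauli_factor (length Q) (cosh y, sinh y, Q)"
  unfolding pauli_exp_def pauli_factor_def
  by (simp add: mexp_smult_involution[OF pauli_mat_carrier pauli_mat_square])

lemma abs_sinh_abs_cosh_le:
  fixes y :: real
  assumes "\<bar>y\<bar> \<le> \<delta>"
  shows "\<bar>sinh y\<bar> \<le> sinh \<delta>" and "\<bar>cosh y\<bar> + \<bar>sinh y\<bar> \<le> exp \<delta>"
proof -
  show "\<bar>sinh y\<bar> \<le> sinh \<delta>"
    using assms by (simp flip: sinh_real_abs)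
  have "\<bar>cosh y\<bar> + \<bar>sinh y\<bar> = exp \<bar>y\<bar>"
    using cosh_plus_sinh[of "\<bar>y\<bar>"] by simp
  then show "\<bar>cosh y\<bar> + \<bar>sinh y\<bar> \<le> exp \<delta>"
    using assms by simp
qed

theorem mtrace_pauli_mult_pauli_exp_prod_le:
  fixes ys :: "(real \<times> pauli list) list"
  assumes P: "length P = n" and k: "k \<ge> 1" and \<delta>: "0 \<le> \<delta>"
    and ys: "\<forall>(y, Q) \<in> set ys. length Q = n \<and> card (supp Q) \<le> k \<and> \<bar>y\<bar> \<le> \<delta>"
  defines "r \<equiv> nat \<lceil>real (card (supp P)) / real k\<rceil>"
  shows "cmod (mtrace (pauli_mat P * mprod_list (2 ^ n) (map (\<lambda>(y, Q). pauli_exp y Q) ys))) / 2 ^ n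
    \<le> real (length (filter (\<lambda>(_, Q). supp Q \<inter> supp P \<noteq> {}) ys) choose r) * sinh \<delta> ^ r * exp \<delta> ^ length ys"
proof -
  define ws where "ws = map (\<lambda>(y, Q). (cosh y, sinh y, Q)) ys"
  define W where "W = map (factor_weight (supp P)) ws"
  have ws: "\<forall>(c, s, Q) \<in> set ws. length Q = n \<and> card (supp Q) \<le> k"
    using ys by (auto simp: ws_def)
  have "map (\<lambda>(y, Q). pauli_exp y Q) ys = map (pauli_factor n) ws"
    using ys by (auto simp: ws_def pauli_exp_eq_pauli_factor)
  moreover have "mprod_list (2 ^ n) (map (pauli_factor n) ws) \<in> carrier_mat (2 ^ n) (2 ^ n)"
    using ws by (intro mprod_list_carrier) auto
  ultimately have "mprod_list (2 ^ n) (map (\<lambda>(y, Q). pauli_exp y Q) ys)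
      = tensor_mat n (\<lambda>_. id2) * mprod_list (2 ^ n) (map (pauli_factor n) ws)"
    by (simp flip: one_mat_eq_tensor_mat)
  then have "cmod (mtrace (pauli_mat P * mprod_list (2 ^ n) (map (\<lambda>(y, Q). pauli_exp y Q) ys)))
      \<le> 2 ^ n * cover_weight W r"
    using ceiling_div_mult_less[OF k]
    by (simp add: W_def) (intro mtrace_pauli_prod_le_cover_weight[OF P k ws];
        auto simp: row_contraction_id2 r_def)
  also have "cover_weight W r \<le> real (length (filter (\<lambda>(_, _, t). t) W) choose r) * sinh \<delta> ^ r * exp \<delta> ^ length W"
  proof (rule cover_weight_le_binomial)
    show "\<forall>(c, s, t) \<in> set W. 0 \<le> c \<and> 0 \<le> s \<and> s \<le> sinh \<delta> \<and> c + s \<le> exp \<delta>"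
      using ys abs_sinh_abs_cosh_le by (fastforce simp: W_def ws_def factor_weight_def)
  qed (use \<delta> in auto)
  also have "length (filter (\<lambda>(_, _, t). t) W) = length (filter (\<lambda>(_, Q). supp Q \<inter> supp P \<noteq> {}) ys)"
    by (simp add: W_def ws_def factor_weight_def filter_map o_def split_def)
  finally show ?thesis
    by (simp add: W_def ws_def field_simps)
qed

section \<open>The Trotter product\<close>

text \<open>The indices of the factors of \<open>U\<^sub>l\<^sub>e\<^sub>f\<^sub>t U\<^sub>r\<^sub>i\<^sub>g\<^sub>h\<^sub>t\<close>, read from left to right.\<close>

definition trotter_word :: "nat \<Rightarrow> nat \<Rightarrow> nat \<Rightarrow> nat list" where
  "trotter_word M p j = rev [1..<j+1] @ concat (replicate p (rev [1..<M+1])) @ concat (replicate p [1..<M+1]) @ [1..<j+1]"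

lemma set_trotter_word: "j \<le> M \<Longrightarrow> set (trotter_word M p j) \<subseteq> {1..M}"
  by (auto simp: trotter_word_def)

lemma length_trotter_word: "length (trotter_word M p j) = 2 * j + 2 * p * M"
  by (simp add: trotter_word_def length_concat sum_list_replicate del: upt_Suc)

lemma mprod_list_trotter_word:
  assumes "set (map G [1..<M+1]) \<subseteq> carrier_mat d d" and "j \<le> M"
  shows "mprod_list d (rev (map G [1..<j+1])) * mprod_list d (rev (map G [1..<M+1])) ^\<^sub>m p
      * mprod_list d (map G [1..<M+1]) ^\<^sub>m p * mprod_list d (map G [1..<j+1])
    = mprod_list d (map G (trotter_word M p j))"
proof -
  have "set (map G [1..<j+1]) \<subseteq> set (map G [1..<M+1])"
    using assms(2) by auto
  with assms(1) show ?thesis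
    by (subst mprod_list_pow_sandwich) (auto simp: trotter_word_def rev_map map_concat)
qed

lemma length_filter_trotter_word_le:
  assumes "j \<le> M"
  shows "length (filter f (trotter_word M p j)) \<le> 2 * (p + 1) * card {m \<in> {1..M}. f m}"
proof -
  have count: "length (filter f [1..<i+1]) = card {m \<in> {1..i}. f m}" for i
    by (subst distinct_length_filter) (auto intro!: arg_cong[where f = card])
  have "card {m \<in> {1..j}. f m} \<le> card {m \<in> {1..M}. f m}"
    using assms by (intro card_mono) auto
  moreover have "length (filter f (concat (replicate p xs))) = p * length (filter f xs)" for xs
    by (induction p) auto
  then have "length (filter f (trotter_word M p j))
      = 2 * length (filter f [1..<j+1]) + 2 * p * length (filter f [1..<M+1])"
    by (simp add: trotter_word_def flip: rev_filter del: upt_Suc)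
  ultimately show ?thesis
    unfolding count by (simp add: algebra_simps)
qed

theorem mainTheorem14:
  fixes n k M p j :: nat
    and lam :: "nat \<Rightarrow> real"
    and Q :: "nat \<Rightarrow> pauli list"
    and P :: "pauli list"
    and \<delta> :: real
    and G :: "nat \<Rightarrow> complex mat"
    and X :: "complex mat"
  assumes Q_len: "\<And>m. m \<in> {1..M} \<Longrightarrow> length (Q m) = n"
    and lam_bd: "\<And>m. m \<in> {1..M} \<Longrightarrow> \<bar>lam m\<bar> \<le> 1"
    and Q_loc: "\<And>m. m \<in> {1..M} \<Longrightarrow> card (supp (Q m)) \<le> k"
    and k_pos: "k \<ge> 1"
    and delta_pos: "\<delta> > 0"
    and G_def: "\<And>m. G m = mexp (complex_of_real (\<delta> * lam m) \<cdot>\<^sub>m pauli_mat (Q m))"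
    and j_lt: "j < M"
    and X_def: "X = mprod_list (2 ^ n) (rev (map G [1..<j+1]))
                  * (mprod_list (2 ^ n) (rev (map G [1..<M+1])) ^\<^sub>m p)
                  * (mprod_list (2 ^ n) (map G [1..<M+1]) ^\<^sub>m p)
                  * mprod_list (2 ^ n) (map G [1..<j+1])"
    and P_len: "length P = n"
    and P_nontriv: "supp P \<noteq> {}"
  shows "cmod (mtrace (pauli_mat P * X)) / 2 ^ n
         \<le> (let w = card (supp P);
                r = nat \<lceil>real w / real k\<rceil>;
                B = card {m \<in> {1..M}. supp (Q m) \<inter> supp P \<noteq> {}};
                \<beta> = (real p + 1) * \<delta>
            in (2 * exp 1 * \<beta> * real B * exp \<delta> / real r) ^ r * exp (2 * \<beta> * real M))"
proof -
  define ys where "ys = map (\<lambda>m. (\<delta> * lam m, Q m)) (trotter_word M p j)"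
  define r where "r = nat \<lceil>real (card (supp P)) / real k\<rceil>"
  define B where "B = card {m \<in> {1..M}. supp (Q m) \<inter> supp P \<noteq> {}}"
  define \<beta> where "\<beta> = (real p + 1) * \<delta>"
  have G: "G = (\<lambda>m. pauli_exp (\<delta> * lam m) (Q m))"
    using G_def by (auto simp: pauli_exp_def)
  have "set (map G [1..<M+1]) \<subseteq> carrier_mat (2 ^ n) (2 ^ n)"
    using Q_len by (auto simp: G pauli_exp_eq_pauli_factor)
  then have "X = mprod_list (2 ^ n) (map G (trotter_word M p j))"
    unfolding X_def using j_lt by (intro mprod_list_trotter_word) auto
  then have X: "X = mprod_list (2 ^ n) (map (\<lambda>(y, Q). pauli_exp y Q) ys)"
    by (simp add: ys_def G o_def)
  have ys: "\<forall>(y, Q) \<in> set ys. length Q = n \<and> card (supp Q) \<le> k \<and> \<bar>y\<bar> \<le> \<delta>"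
    using set_trotter_word[of j M p] j_lt Q_len Q_loc lam_bd delta_pos mult_left_le[of _ \<delta>]
    by (auto simp: ys_def abs_mult)
  define N where "N = length (filter (\<lambda>(_, Q). supp Q \<inter> supp P \<noteq> {}) ys)"
  have "N \<le> 2 * (p + 1) * B"
    using length_filter_trotter_word_le[of j M "\<lambda>m. supp (Q m) \<inter> supp P \<noteq> {}" p] j_lt
    by (simp add: N_def ys_def B_def filter_map o_def)
  from mult_right_mono[OF of_nat_mono[OF this, where 'a = real] less_imp_le[OF delta_pos]]
  have N: "real N * \<delta> \<le> 2 * \<beta> * real B"
    by (simp add: \<beta>_def algebra_simps)
  have "length ys \<le> 2 * (p + 1) * M"
    using j_lt by (simp add: ys_def length_trotter_word)
  from mult_right_mono[OF of_nat_mono[OF this, where 'a = real] less_imp_le[OF delta_pos]]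
  have L: "real (length ys) * \<delta> \<le> 2 * \<beta> * real M"
    by (simp add: \<beta>_def algebra_simps)
  have "cmod (mtrace (pauli_mat P * X)) / 2 ^ n \<le> real (N choose r) * sinh \<delta> ^ r * exp \<delta> ^ length ys"
    unfolding X N_def r_def using delta_pos by (intro mtrace_pauli_mult_pauli_exp_prod_le[OF P_len k_pos _ ys]) simp
  also have "\<dots> \<le> (2 * exp 1 * \<beta> * real B * exp \<delta> / real r) ^ r * exp (2 * \<beta> * real M)"
    using delta_pos N L by (rule binomial_sinh_exp_le[OF less_imp_le])
  finally show ?thesis
    by (simp add: Let_def B_def r_def \<beta>_def)
qed

end
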